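(* Let $G$ be an abelian group with $\mathbb{Z}^{(\omega)}\subseteq G\subseteq\mathbb{Z}^\omega$ and $|G|<\mathfrak{p}$. Then $G$ is not weakly $\mathbb{Z}^{(\omega)}$-binding; that is, there is a homomorphism $G\to\mathbb{Z}^{(\omega)}$ that extends to an endomorphism of $\mathbb{Z}^\omega$ and maps $\mathbb{Z}^{(\omega)}$ onto a group of infinite rank.
   Context: $\mathbb{Z}^{\omega}$ is the product of countably many copies of $\mathbb{Z}$; $\mathbb{Z}^{(\omega)}\subseteq\mathbb{Z}^\omega$ is the subgroup of finitely supported sequences. Rank means torsion-free rank. $G$ with $\mathbb{Z}^{(\omega)}\subseteq G\subseteq\mathbb{Z}^\omega$ is weakly $\mathbb{Z}^{(\omega)}$-binding if every homomorphism $G\to\mathbb{Z}^{(\omega)}$ that extends to an endomorphism of $\mathbb{Z}^\omega$ maps $\mathbb{Z}^{(\omega)}$ to a group of finite rank. $\mathfrak{p}$ is the pseudointersection number: the smallest cardinality of a family $\mathcal F$ of subsets of $\omega$ such that every finite subfamily has infinite intersection but there is no infinite $A\subseteq\omega$ with $A\setminus F$ finite for all $F\in\mathcal F$. *)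

theory Defs
  imports Main
begin

text \<open>Z^omega is modelled as the type nat => int (all integer sequences).\<close>

definition fin_supp_seqs :: "(nat \<Rightarrow> int) set" where
  "fin_supp_seqs = {x. finite {n. x n \<noteq> 0}}"

definition is_endo :: "((nat \<Rightarrow> int) \<Rightarrow> (nat \<Rightarrow> int)) \<Rightarrow> bool" where
  "is_endo f \<longleftrightarrow> (\<forall>x y. f (\<lambda>n. x n + y n) = (\<lambda>n. f x n + f y n))"

definition is_subgroup :: "(nat \<Rightarrow> int) set \<Rightarrow> bool" where
  "is_subgroup G \<longleftrightarrow> (\<lambda>n. 0) \<in> G \<and> (\<forall>x\<in>G. \<forall>y\<in>G. (\<lambda>n. x n + y n) \<in> G)
     \<and> (\<forall>x\<in>G. (\<lambda>n. - x n) \<in> G)"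

definition int_lin_indep :: "(nat \<Rightarrow> int) set \<Rightarrow> bool" where
  "int_lin_indep S \<longleftrightarrow> (\<forall>T c. finite T \<longrightarrow> T \<subseteq> S \<longrightarrow>
      (\<lambda>n. \<Sum>x\<in>T. c x * x n) = (\<lambda>n. 0) \<longrightarrow> (\<forall>x\<in>T. c x = 0))"

definition infinite_rank :: "(nat \<Rightarrow> int) set \<Rightarrow> bool" where
  "infinite_rank H \<longleftrightarrow> (\<exists>S\<subseteq>H. infinite S \<and> int_lin_indep S)"

definition has_sfip :: "nat set set \<Rightarrow> bool" where
  "has_sfip F \<longleftrightarrow> (\<forall>E. finite E \<longrightarrow> E \<subseteq> F \<longrightarrow> infinite (\<Inter>E))"

definition has_pseudointersection :: "nat set set \<Rightarrow> bool" where
  "has_pseudointersection F \<longleftrightarrow> (\<exists>A. infinite A \<and> (\<forall>X\<in>F. finite (A - X)))"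

definition card_below_p :: "'a set \<Rightarrow> bool" where
  "card_below_p G \<longleftrightarrow> (\<forall>F. has_sfip F \<and> \<not> has_pseudointersection F \<longrightarrow> (card_of G, card_of F) \<in> ordLess)"

end

theory Submission
  imports Defs "HOL-Library.Countable"
begin

(* Code the finitely supported linear forms on Z^omega by natural numbers (coefficient lists
   via from_nat). For g in G let the codes of forms annihilating g, and for each m the codes of
   nonzero forms vanishing on the first m coordinates, form a family F. Since a homogeneous
   integer system with more unknowns than equations has a nontrivial solution, every finite
   subfamily of F has infinite intersection; and |F| <= |G| < p. So F has an infinite
   pseudointersection A. Inside A one picks forms whose supports lie in consecutive disjoint
   intervals; used as the coordinates of a map Z^omega -> Z^omega they send each g in G to a
   finitely supported sequence (almost every form in A annihilates g), and suitable unit vectors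
   to a diagonal, hence independent, infinite family. *)

lemma homogeneous_system_nontrivial_solution:
  fixes hs :: "('i \<Rightarrow> 'a::idom) list"
  assumes "finite I" and "length hs < card I"
  shows "\<exists>c. (\<forall>i. i \<notin> I \<longrightarrow> c i = 0) \<and> (\<exists>i\<in>I. c i \<noteq> 0)
    \<and> (\<forall>h\<in>set hs. (\<Sum>i\<in>I. c i * h i) = 0)"
  using assms
proof (induction "length hs" arbitrary: hs I)
  case 0
  then obtain i0 where "i0 \<in> I" by fastforce
  then show ?case using 0 by (intro exI[of _ "\<lambda>i. if i = i0 then 1 else 0"]) auto
next
  case (Suc n)
  then obtain g hs' where hs: "hs = g # hs'" "length hs' = n" by (cases hs) auto
  show ?case
  proof (cases "\<forall>i\<in>I. g i = 0")
    case True
    then show ?thesis using Suc.hyps(1)[of hs' I] Suc.prems hs by auto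
  next
    case False
    then obtain i0 where i0: "i0 \<in> I" "g i0 \<noteq> 0" by auto
    define I' where "I' = I - {i0}"
    \<comment> \<open>Eliminate the unknown \<open>i0\<close> by means of the equation \<open>g\<close>; back-substitution gives \<open>c i0\<close>.\<close>
    define elim where "elim h i = g i0 * h i - g i * h i0" for h i
    have "length (map elim hs') < card I'"
      using Suc.prems(2) hs i0 by (simp add: I'_def card_Diff_singleton Suc.prems(1))
    then obtain d where d: "\<forall>i. i \<notin> I' \<longrightarrow> d i = 0" "\<exists>i\<in>I'. d i \<noteq> 0"
      "\<forall>h\<in>set hs'. (\<Sum>i\<in>I'. d i * elim h i) = 0"
      using Suc.hyps(1)[of "map elim hs'" I'] Suc.prems(1) hs by (auto simp: I'_def)
    define c where "c i = (if i = i0 then - (\<Sum>j\<in>I'. d j * g j) else g i0 * d i)" for i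
    have c_sum: "(\<Sum>i\<in>I. c i * h i) = (\<Sum>i\<in>I'. d i * elim h i)" for h
    proof -
      have "(\<Sum>i\<in>I. c i * h i) = c i0 * h i0 + (\<Sum>i\<in>I'. c i * h i)"
        using sum.remove[OF Suc.prems(1) i0(1)] by (simp add: I'_def)
      also have "(\<Sum>i\<in>I'. c i * h i) = (\<Sum>i\<in>I'. g i0 * d i * h i)"
        by (rule sum.cong) (auto simp: c_def I'_def)
      finally show ?thesis
        by (simp add: c_def elim_def right_diff_distrib sum_subtractf sum_distrib_left
            sum_distrib_right algebra_simps)
    qed
    show ?thesis
    proof (intro exI[of _ c] conjI)
      show "\<forall>i. i \<notin> I \<longrightarrow> c i = 0" "\<exists>i\<in>I. c i \<noteq> 0"
        using d(1,2) i0 by (auto simp: c_def I'_def)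
      show "\<forall>h\<in>set hs. (\<Sum>i\<in>I. c i * h i) = 0"
        using d(3) by (auto simp: hs c_sum elim_def)
    qed
  qed
qed

definition lin_form :: "int list \<Rightarrow> (nat \<Rightarrow> int) \<Rightarrow> int" where
  "lin_form cs x = (\<Sum>i<length cs. cs ! i * x i)"

definition nonzero_from :: "nat \<Rightarrow> int list \<Rightarrow> bool" where
  "nonzero_from m cs \<longleftrightarrow> (\<forall>i<length cs. i < m \<longrightarrow> cs ! i = 0) \<and> (\<exists>i<length cs. cs ! i \<noteq> 0)"

definition unit_seq :: "nat \<Rightarrow> nat \<Rightarrow> int" where
  "unit_seq j = (\<lambda>n. if n = j then 1 else 0)"

lemma lin_form_add: "lin_form cs (\<lambda>n. x n + y n) = lin_form cs x + lin_form cs y"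
  by (simp add: lin_form_def distrib_left sum.distrib)

lemma lin_form_unit_seq: "lin_form cs (unit_seq j) = (if j < length cs then cs ! j else 0)"
  by (simp add: lin_form_def unit_seq_def if_distrib[of "\<lambda>x. _ * x"] cong: if_cong)

lemma lin_form_append_zeros: "lin_form (cs @ replicate t 0) x = lin_form cs x"
proof -
  have "lin_form (cs @ replicate t 0) x = (\<Sum>i<length cs. (cs @ replicate t 0) ! i * x i)"
    unfolding lin_form_def by (rule sum.mono_neutral_right) (auto simp: nth_append)
  then show ?thesis by (simp add: lin_form_def nth_append)
qed

lemma nonzero_from_append_zeros: "nonzero_from m (cs @ replicate t 0) \<longleftrightarrow> nonzero_from m cs"
  unfolding nonzero_from_def
  by (auto simp: nth_append) (metis add_diff_inverse_nat add_less_cancel_left nth_replicate)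

lemma nonzero_from_antimono: "nonzero_from m cs \<Longrightarrow> k \<le> m \<Longrightarrow> nonzero_from k cs"
  by (auto simp: nonzero_from_def)

lemma exists_nonzero_from_annihilating:
  assumes "finite H"
  shows "\<exists>cs. nonzero_from M cs \<and> (\<forall>g\<in>H. lin_form cs g = 0)"
proof -
  obtain hs where hs: "set hs = H" using assms finite_list by blast
  define r where "r = length hs"
  obtain c where c: "\<forall>i. i \<notin> {M..M+r} \<longrightarrow> c i = 0" "\<exists>i\<in>{M..M+r}. c i \<noteq> 0"
    "\<forall>g\<in>H. (\<Sum>i\<in>{M..M+r}. c i * g i) = 0"
    using homogeneous_system_nontrivial_solution[of "{M..M+r}" hs] hs by (auto simp: r_def)
  define cs where "cs = map c [0..<Suc (M+r)]"
  have "lin_form cs g = (\<Sum>i\<in>{M..M+r}. c i * g i)" for g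
  proof -
    have "lin_form cs g = (\<Sum>i<Suc (M+r). c i * g i)"
      by (simp add: lin_form_def cs_def del: upt_Suc)
    also have "\<dots> = (\<Sum>i\<in>{M..M+r}. c i * g i)"
      by (rule sum.mono_neutral_right) (use c(1) in auto)
    finally show ?thesis .
  qed
  moreover have "nonzero_from M cs"
    using c(1,2) unfolding nonzero_from_def cs_def
    by (auto simp del: upt_Suc)
  ultimately show ?thesis using c(3) by auto
qed

definition annihilator_codes :: "(nat \<Rightarrow> int) \<Rightarrow> nat set" where
  "annihilator_codes g = {n. lin_form (from_nat n) g = 0}"

definition nonzero_from_codes :: "nat \<Rightarrow> nat set" where
  "nonzero_from_codes m = {n. nonzero_from m (from_nat n)}"

lemma infinite_nonzero_from_annihilator_codes:
  assumes "finite H"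
  shows "infinite (nonzero_from_codes M \<inter> (\<Inter>g\<in>H. annihilator_codes g))"
proof -
  obtain cs where cs: "nonzero_from M cs" "\<forall>g\<in>H. lin_form cs g = 0"
    using exists_nonzero_from_annihilating[OF assms] by blast
  define pad where "pad t = to_nat (cs @ replicate t 0)" for t
  have "inj pad"
    by (rule injI) (metis pad_def from_nat_to_nat length_append length_replicate add_left_cancel)
  moreover have "range pad \<subseteq> nonzero_from_codes M \<inter> (\<Inter>g\<in>H. annihilator_codes g)"
    using cs by (auto simp: pad_def nonzero_from_codes_def annihilator_codes_def
        lin_form_append_zeros nonzero_from_append_zeros)
  ultimately show ?thesis
    by (metis finite_imageD finite_subset infinite_UNIV_nat)
qed

lemma has_sfip_annihilator_nonzero_from_codes:
  "has_sfip (annihilator_codes ` G \<union> range nonzero_from_codes)"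
  unfolding has_sfip_def
proof (intro allI impI)
  fix E assume E: "finite E" "E \<subseteq> annihilator_codes ` G \<union> range nonzero_from_codes"
  obtain H where H: "finite H" "E \<inter> annihilator_codes ` G = annihilator_codes ` H"
    using finite_subset_image[of "E \<inter> annihilator_codes ` G"] E(1) by (metis Int_lower2 finite_Int)
  obtain Ms where Ms: "finite Ms" "E \<inter> range nonzero_from_codes = nonzero_from_codes ` Ms"
    using finite_subset_image[of "E \<inter> range nonzero_from_codes"] E(1)
    by (metis Int_lower2 finite_Int)
  define M where "M = Max (insert 0 Ms)"
  have M_bound: "nonzero_from_codes M \<subseteq> nonzero_from_codes m" if "m \<in> Ms" for m
  proof -
    have "m \<le> M" using that Ms(1) by (simp add: M_def)
    then show ?thesis by (auto simp: nonzero_from_codes_def intro: nonzero_from_antimono)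
  qed
  have "nonzero_from_codes M \<inter> (\<Inter>g\<in>H. annihilator_codes g) \<subseteq> X" if "X \<in> E" for X
  proof -
    have "X \<in> annihilator_codes ` H \<union> nonzero_from_codes ` Ms"
      unfolding H(2)[symmetric] Ms(2)[symmetric] using that E(2) by blast
    then show ?thesis using M_bound by blast
  qed
  then show "infinite (\<Inter>E)"
    using infinite_nonzero_from_annihilator_codes[OF H(1)] finite_subset Inter_greatest
    by metis
qed

lemma unit_seq_in_fin_supp_seqs: "unit_seq j \<in> fin_supp_seqs"
  by (simp add: unit_seq_def fin_supp_seqs_def)

lemma infinite_fin_supp_seqs: "infinite fin_supp_seqs"
proof -
  have "inj unit_seq"
    by (rule injI) (metis unit_seq_def one_neq_zero)
  then show ?thesis
    using unit_seq_in_fin_supp_seqs finite_imageD finite_subset infinite_UNIV_nat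
    by (metis image_subsetI)
qed

lemma card_of_code_family_ordLeq:
  assumes "infinite G"
  shows "(card_of (annihilator_codes ` G \<union> range nonzero_from_codes), card_of G) \<in> ordLeq"
proof (rule card_of_Un_ordLeq_infinite_Field)
  show "infinite (Field (card_of G))" using assms by (simp add: Field_card_of)
  show "(card_of (annihilator_codes ` G), card_of G) \<in> ordLeq" by (rule card_of_image)
  show "(card_of (range nonzero_from_codes), card_of G) \<in> ordLeq"
    using card_of_image[of nonzero_from_codes UNIV] assms infinite_iff_card_of_nat
      ordLeq_transitive by blast
qed (rule card_of_Card_order)

definition staircase :: "(nat \<Rightarrow> int list) \<Rightarrow> bool" where
  "staircase cs \<longleftrightarrow> nonzero_from 0 (cs 0) \<and> (\<forall>k. nonzero_from (length (cs k)) (cs (Suc k)))"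

lemma staircase_strict_mono_length:
  assumes "staircase cs"
  shows "strict_mono (\<lambda>k. length (cs k))"
  unfolding strict_mono_Suc_iff
proof
  fix k
  show "length (cs k) < length (cs (Suc k))"
    using assms unfolding staircase_def nonzero_from_def by (meson not_le order.strict_trans1)
qed

lemma staircase_diagonal:
  assumes "staircase cs"
  obtains p where "\<And>j k. lin_form (cs j) (unit_seq (p k)) \<noteq> 0 \<longleftrightarrow> j = k"
proof -
  define l where "l k = length (cs k)" for k
  \<comment> \<open>the support of \<open>cs k\<close> lies in \<open>[lo k, l k)\<close>, and these intervals are disjoint\<close>
  define lo where "lo k = (case k of 0 \<Rightarrow> 0 | Suc k' \<Rightarrow> l k')" for k
  have nz: "nonzero_from (lo k) (cs k)" for k
    using assms by (cases k) (auto simp: staircase_def lo_def l_def)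
  then have "\<exists>i. lo k \<le> i \<and> i < l k \<and> cs k ! i \<noteq> 0" for k
    unfolding nonzero_from_def l_def by (meson not_le)
  then obtain p where p: "\<And>k. lo k \<le> p k" "\<And>k. p k < l k" "\<And>k. cs k ! p k \<noteq> 0"
    by metis
  have support: "lo j \<le> i \<and> i < l j" if "lin_form (cs j) (unit_seq i) \<noteq> 0" for i j
    using that nz[of j] by (auto simp: lin_form_unit_seq nonzero_from_def l_def split: if_splits)
  have "l j \<le> lo k" if "j < k" for j k
    using that strict_mono_less_eq[OF staircase_strict_mono_length[OF assms]]
    by (cases k) (auto simp: lo_def l_def less_Suc_eq_le)
  then have disjoint: "j = k" if "lo j \<le> i" "i < l j" "lo k \<le> i" "i < l k" for i j k
    using that by (metis linorder_neqE_nat not_le order.strict_trans2)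
  show thesis
  proof (rule that)
    fix j k
    show "lin_form (cs j) (unit_seq (p k)) \<noteq> 0 \<longleftrightarrow> j = k"
    proof
      assume "lin_form (cs j) (unit_seq (p k)) \<noteq> 0"
      then show "j = k" using support disjoint p(1,2) by blast
    next
      assume "j = k"
      then show "lin_form (cs j) (unit_seq (p k)) \<noteq> 0"
        using p(2,3) by (simp add: lin_form_unit_seq l_def)
    qed
  qed
qed

lemma infinite_rank_if_diagonal:
  assumes "range v \<subseteq> H" and "\<And>k. v k k \<noteq> 0" and "\<And>j k. j \<noteq> k \<Longrightarrow> v k j = 0"
  shows "infinite_rank H"
  unfolding infinite_rank_def
proof (intro exI conjI)
  show "range v \<subseteq> H" by (fact assms(1))
  have "inj v" by (rule injI) (metis assms(2,3))
  then show "infinite (range v)" using finite_imageD by blast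
  show "int_lin_indep (range v)"
    unfolding int_lin_indep_def
  proof (intro allI impI ballI)
    fix T c x
    assume T: "finite T" "T \<subseteq> range v" "(\<lambda>n. \<Sum>y\<in>T. c y * y n) = (\<lambda>n. 0)" "x \<in> T"
    then obtain k where k: "x = v k" by auto
    have "(\<Sum>y\<in>T - {x}. c y * y k) = 0"
    proof (rule sum.neutral, rule ballI)
      fix y assume "y \<in> T - {x}"
      then obtain j where "y = v j" "j \<noteq> k" using T(2) k by auto
      then show "c y * y k = 0" using assms(3) by simp
    qed
    then have "(\<Sum>y\<in>T. c y * y k) = c x * x k"
      using sum.remove[OF T(1) T(4), of "\<lambda>y. c y * y k"] by simp
    then show "c x = 0" using fun_cong[OF T(3), of k] assms(2) k by simp
  qed
qed

definition form_map :: "(nat \<Rightarrow> int list) \<Rightarrow> (nat \<Rightarrow> int) \<Rightarrow> nat \<Rightarrow> int" where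
  "form_map cs x = (\<lambda>k. lin_form (cs k) x)"

lemma is_endo_form_map: "is_endo (form_map cs)"
  by (simp add: is_endo_def form_map_def lin_form_add)

lemma infinite_rank_form_map:
  assumes "staircase cs"
  shows "infinite_rank (form_map cs ` fin_supp_seqs)"
proof -
  obtain p where p: "\<And>j k. lin_form (cs j) (unit_seq (p k)) \<noteq> 0 \<longleftrightarrow> j = k"
    using staircase_diagonal[OF assms] by blast
  show ?thesis
    by (rule infinite_rank_if_diagonal[of "\<lambda>k. form_map cs (unit_seq (p k))"])
      (use p unit_seq_in_fin_supp_seqs in \<open>auto simp: form_map_def\<close>)
qed

lemma staircase_codes_within:
  assumes "infinite A" and "\<And>m. finite (A - nonzero_from_codes m)"
  obtains s where "range s \<subseteq> A" and "staircase (\<lambda>k. from_nat (s k))"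
proof -
  have "infinite (A \<inter> nonzero_from_codes m)" for m
    using Diff_infinite_finite[OF assms(2) assms(1)] by (simp add: Diff_Diff_Int)
  then have pick: "\<exists>n. n \<in> A \<and> nonzero_from m (from_nat n)" for m
    by (metis IntE finite.emptyI mem_Collect_eq nonzero_from_codes_def ex_in_conv)
  have "\<exists>s. \<forall>k. (s k \<in> A \<and> nonzero_from 0 (from_nat (s k)))
      \<and> nonzero_from (length (from_nat (s k) :: int list)) (from_nat (s (Suc k)))"
  proof (rule dependent_nat_choice[where P = "\<lambda>_ n. n \<in> A \<and> nonzero_from 0 (from_nat n)"
        and Q = "\<lambda>_ n n'. nonzero_from (length (from_nat n :: int list)) (from_nat n')"])
    show "\<exists>n. n \<in> A \<and> nonzero_from 0 (from_nat n)" by (rule pick)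
    fix n k :: nat
    assume "n \<in> A \<and> nonzero_from 0 (from_nat n)"
    show "\<exists>n'. (n' \<in> A \<and> nonzero_from 0 (from_nat n'))
        \<and> nonzero_from (length (from_nat n :: int list)) (from_nat n')"
      using pick[of "length (from_nat n :: int list)"] nonzero_from_antimono by blast
  qed
  then show thesis
    by (metis image_subsetI staircase_def that)
qed

lemma endo_from_pseudointersection:
  assumes "infinite A"
    and "\<And>g. g \<in> G \<Longrightarrow> finite (A - annihilator_codes g)"
    and "\<And>m. finite (A - nonzero_from_codes m)"
  shows "\<exists>f. is_endo f \<and> f ` G \<subseteq> fin_supp_seqs \<and> infinite_rank (f ` fin_supp_seqs)"
proof -
  obtain s where s: "range s \<subseteq> A" "staircase (\<lambda>k. from_nat (s k))"
    using staircase_codes_within assms(1,3) by blast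
  define f where "f = form_map (\<lambda>k. from_nat (s k))"
  have "inj s"
  proof (rule injI)
    fix a b assume "s a = s b"
    then show "a = b"
      using strict_mono_eq[OF staircase_strict_mono_length[OF s(2)], of a b] by simp
  qed
  have "f g \<in> fin_supp_seqs" if "g \<in> G" for g
  proof -
    have "{k. f g k \<noteq> 0} \<subseteq> s -` (A - annihilator_codes g)"
      using s(1) by (auto simp: f_def form_map_def annihilator_codes_def)
    moreover have "finite (s -` (A - annihilator_codes g))"
      using assms(2)[OF that] \<open>inj s\<close> by (simp add: finite_vimageI)
    ultimately show ?thesis
      unfolding fin_supp_seqs_def using finite_subset by auto
  qed
  then show ?thesis
    using is_endo_form_map infinite_rank_form_map[OF s(2)] unfolding f_def by blast
qed

theorem theorem9:
  fixes G :: "(nat \<Rightarrow> int) set"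
  assumes "is_subgroup G"
    and "fin_supp_seqs \<subseteq> G"
    and "card_below_p G"
  shows "\<exists>f. is_endo f \<and> f ` G \<subseteq> fin_supp_seqs \<and> infinite_rank (f ` fin_supp_seqs)"
proof -
  define F where "F = annihilator_codes ` G \<union> range nonzero_from_codes"
  have "infinite G" using assms(2) infinite_fin_supp_seqs finite_subset by blast
  then have "(card_of F, card_of G) \<in> ordLeq"
    unfolding F_def by (rule card_of_code_family_ordLeq)
  then have "has_pseudointersection F"
    using assms(3) has_sfip_annihilator_nonzero_from_codes not_ordLess_ordLeq
    unfolding card_below_p_def F_def by blast
  then obtain A where "infinite A" "\<And>X. X \<in> F \<Longrightarrow> finite (A - X)"
    unfolding has_pseudointersection_def by blast
  then show ?thesis
    by (intro endo_from_pseudointersection[of A]) (auto simp: F_def)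
qed

end
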